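(* Let $R$ be a reduced commutative ring and let $I$ be a pure ideal of $R$. Then $R$ is Gaussian if and only if $R\bowtie I$ is Gaussian.
   Context: All rings are commutative with identity. For an ideal $I$ of $R$, $R\bowtie I=\{(r,r+i): r\in R,\ i\in I\}$ is a subring of $R\times R$ (componentwise operations, unit $(1,1)$). An ideal $I$ is pure if $R/I$ is a flat $R$-module. A ring $A$ is Gaussian if $c(fg)=c(f)c(g)$ for all $f,g\in A[X]$, where $c(f)$ is the ideal of $A$ generated by the coefficients of $f$. *)

theory Defs
  imports "HOL-Algebra.UnivPoly" "HOL-Algebra.Ideal_Product" "HOL-Algebra.QuotRing"
          "HOL-Algebra.Module"
begin

definition reduced_ring :: "('a, 'b) ring_scheme \<Rightarrow> bool" where
  "reduced_ring R \<longleftrightarrow> (\<forall>x \<in> carrier R. \<forall>n::nat. x [^]\<^bsub>R\<^esub> n = \<zero>\<^bsub>R\<^esub> \<longrightarrow> x = \<zero>\<^bsub>R\<^esub>)"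

text \<open>Flatness of an R-module M over R, defined by the equational
  criterion: every relation among elements of M is a consequence of relations in R.\<close>
definition flat_module :: "('a, 'c) ring_scheme \<Rightarrow> ('a, 'b) module \<Rightarrow> bool" where
  "flat_module R M \<longleftrightarrow>
    (\<forall>(n::nat) (a :: nat \<Rightarrow> 'a) (x :: nat \<Rightarrow> 'b).
       (\<forall>i<n. a i \<in> carrier R \<and> x i \<in> carrier M) \<and>
       finsum M (\<lambda>i. a i \<odot>\<^bsub>M\<^esub> x i) {..<n} = \<zero>\<^bsub>M\<^esub>
       \<longrightarrow> (\<exists>(m::nat) (b :: nat \<Rightarrow> nat \<Rightarrow> 'a) (y :: nat \<Rightarrow> 'b).
             (\<forall>j<m. y j \<in> carrier M) \<and>
             (\<forall>i<n. \<forall>j<m. b i j \<in> carrier R) \<and>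
             (\<forall>i<n. x i = finsum M (\<lambda>j. b i j \<odot>\<^bsub>M\<^esub> y j) {..<m}) \<and>
             (\<forall>j<m. finsum R (\<lambda>i. a i \<otimes>\<^bsub>R\<^esub> b i j) {..<n} = \<zero>\<^bsub>R\<^esub>)))"

text \<open>The quotient R/I viewed as an R-module (scalar action r.(I+x) = I+(r x)).\<close>
definition quot_module :: "('a, 'b) ring_scheme \<Rightarrow> 'a set \<Rightarrow> ('a, 'a set) module" where
  "quot_module R I =
     \<lparr> carrier = a_rcosets\<^bsub>R\<^esub> I,
       mult = rcoset_mult R I,
       one = I +>\<^bsub>R\<^esub> \<one>\<^bsub>R\<^esub>,
       zero = I,
       add = set_add R,
       smult = (\<lambda>r X. rcoset_mult R I (I +>\<^bsub>R\<^esub> r) X) \<rparr>"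

definition pure_ideal :: "('a, 'b) ring_scheme \<Rightarrow> 'a set \<Rightarrow> bool" where
  "pure_ideal R I \<longleftrightarrow> ideal I R \<and> flat_module R (quot_module R I)"

definition amalg_dup :: "('a, 'b) ring_scheme \<Rightarrow> 'a set \<Rightarrow> ('a \<times> 'a) ring" where
  "amalg_dup R I =
     \<lparr> carrier = {(r, r \<oplus>\<^bsub>R\<^esub> i) | r i. r \<in> carrier R \<and> i \<in> I},
       mult = (\<lambda>(a, b) (c, d). (a \<otimes>\<^bsub>R\<^esub> c, b \<otimes>\<^bsub>R\<^esub> d)),
       one = (\<one>\<^bsub>R\<^esub>, \<one>\<^bsub>R\<^esub>),
       zero = (\<zero>\<^bsub>R\<^esub>, \<zero>\<^bsub>R\<^esub>),
       add = (\<lambda>(a, b) (c, d). (a \<oplus>\<^bsub>R\<^esub> c, b \<oplus>\<^bsub>R\<^esub> d)) \<rparr>"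

definition content :: "('a, 'b) ring_scheme \<Rightarrow> (nat \<Rightarrow> 'a) \<Rightarrow> 'a set" where
  "content A f = Idl\<^bsub>A\<^esub> (range (coeff (UP A) f))"

definition gaussian_ring :: "('a, 'b) ring_scheme \<Rightarrow> bool" where
  "gaussian_ring A \<longleftrightarrow>
    (\<forall>f \<in> carrier (UP A). \<forall>g \<in> carrier (UP A).
       content A (f \<otimes>\<^bsub>UP A\<^esub> g) = ideal_prod A (content A f) (content A g))"

end

theory Submission
  imports Defs "HOL-Algebra.Chinese_Remainder" "HOL-Algebra.Subrings"
begin

text \<open>
  A ring is Gaussian iff every product \<open>f\<^sub>k g\<^sub>l\<close> of coefficients lies in the
  content \<open>c(fg)\<close>, since \<open>c(fg) \<subseteq> c(f)c(g)\<close> always holds. This property passes to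
  surjective images (lift coefficients, multiply, push the content forward), and \<open>R\<close> is the
  image of \<open>R \<bowtie> I\<close> under the first projection.
  Conversely, let \<open>R\<close> be Gaussian and \<open>F, G\<close> polynomials over \<open>R \<bowtie> I\<close>. Both
  projections are surjective, so applying the criterion in each component shows that \<open>c(FG)\<close>
  contains elements \<open>(x, y')\<close> and \<open>(x', y)\<close>, where \<open>(x, y) = F\<^sub>k G\<^sub>l\<close>. Flatness of
  \<open>R/I\<close>, applied to the relation \<open>u \<cdot> (1 + I) = 0\<close>, gives every \<open>u \<in> I\<close> a local unit
  \<open>e \<in> I\<close> with \<open>u e = u\<close>. For \<open>u = y - y'\<close> this yields
  \<open>(x, y) = (x, y') + (0, e) ((x', y) - (x, y')) \<in> c(FG)\<close>.
\<close>

section \<open>Polynomials, contents and ring homomorphisms\<close>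

lemma carrier_UP: "carrier (UP A) = up A"
  by (simp add: UP_def)

lemma UP_mult_eq:
  "f \<in> up A \<Longrightarrow> g \<in> up A \<Longrightarrow>
     f \<otimes>\<^bsub>UP A\<^esub> g = (\<lambda>n. \<Oplus>\<^bsub>A\<^esub>i \<in> {..n}. f i \<otimes>\<^bsub>A\<^esub> g (n - i))"
  by (simp add: UP_def)

lemma content_eq_genideal: "f \<in> up A \<Longrightarrow> content A f = Idl\<^bsub>A\<^esub> (range f)"
  by (simp add: content_def UP_def)

lemma (in ring) UP_mult_in_up: "f \<in> up R \<Longrightarrow> g \<in> up R \<Longrightarrow> f \<otimes>\<^bsub>UP R\<^esub> g \<in> up R"
  by (simp add: UP_mult_eq up_mult_closed)

lemma (in ring) range_up_subset: "f \<in> up R \<Longrightarrow> range f \<subseteq> carrier R"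
  by auto

lemma (in ring_hom_ring) comp_in_up: "f \<in> up R \<Longrightarrow> h \<circ> f \<in> up S"
proof
  assume f: "f \<in> up R"
  show "(h \<circ> f) n \<in> carrier S" for n
    using f by (simp add: mem_upD)
  from f obtain N where "bound \<zero> N f" by auto
  then have "bound \<zero>\<^bsub>S\<^esub> N (h \<circ> f)" by auto
  then show "\<exists>N. bound \<zero>\<^bsub>S\<^esub> N (h \<circ> f)" ..
qed

lemma (in ring_hom_ring) comp_UP_mult:
  assumes f: "f \<in> up R" and g: "g \<in> up R"
  shows "h \<circ> (f \<otimes>\<^bsub>UP R\<^esub> g) = (h \<circ> f) \<otimes>\<^bsub>UP S\<^esub> (h \<circ> g)"
proof
  fix n
  have "(\<lambda>i. f i \<otimes> g (n - i)) \<in> {..n} \<rightarrow> carrier R" using f g by auto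
  then show "(h \<circ> (f \<otimes>\<^bsub>UP R\<^esub> g)) n = ((h \<circ> f) \<otimes>\<^bsub>UP S\<^esub> (h \<circ> g)) n"
    unfolding UP_mult_eq[OF f g] UP_mult_eq[OF comp_in_up[OF f] comp_in_up[OF g]]
    using f g by (simp add: comp_def mem_upD)
qed

lemma (in ring_hom_ring) lift_up:
  assumes surj: "h ` carrier R = carrier S" and f: "f \<in> up S"
  obtains F where "F \<in> up R" and "h \<circ> F = f"
proof
  \<comment> \<open>zero coefficients are lifted to zero, so that the lift keeps finite support\<close>
  define F where "F n = (if f n = \<zero>\<^bsub>S\<^esub> then \<zero> else (SOME a. a \<in> carrier R \<and> h a = f n))" for n
  have F: "F n \<in> carrier R \<and> h (F n) = f n" for n
  proof (cases "f n = \<zero>\<^bsub>S\<^esub>")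
    case False
    have "\<exists>a. a \<in> carrier R \<and> h a = f n"
      using f surj by (metis image_iff mem_upD)
    from someI_ex[OF this] False show ?thesis by (simp add: F_def)
  qed (simp add: F_def)
  from f obtain N where "bound \<zero>\<^bsub>S\<^esub> N f" by auto
  then have "bound \<zero> N F" by (auto simp: F_def)
  with F show "F \<in> up R" by auto
  show "h \<circ> F = f" using F by auto
qed

lemma (in ring_hom_ring) ideal_image:
  assumes surj: "h ` carrier R = carrier S" and J: "ideal J R"
  shows "ideal (h ` J) S"
proof -
  interpret J: ideal J R by (rule J)
  show ?thesis
  proof (rule idealI)
    show "subgroup (h ` J) (add_monoid S)"
      by (rule img_is_add_subgroup) (rule J.a_subgroup)
  next
    fix a x assume "a \<in> h ` J" "x \<in> carrier S"
    then obtain j r where j: "j \<in> J" "a = h j" and r: "r \<in> carrier R" "x = h r"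
      using surj by blast
    have "x \<otimes>\<^bsub>S\<^esub> a = h (r \<otimes> j)" "a \<otimes>\<^bsub>S\<^esub> x = h (j \<otimes> r)"
      using j r by (simp_all add: J.Icarr)
    then show "x \<otimes>\<^bsub>S\<^esub> a \<in> h ` J" "a \<otimes>\<^bsub>S\<^esub> x \<in> h ` J"
      using J.I_l_closed[OF j(1) r(1)] J.I_r_closed[OF j(1) r(1)] by simp_all
  qed (rule S.ring_axioms)
qed

lemma (in ring_hom_ring) genideal_image:
  assumes surj: "h ` carrier R = carrier S" and A: "A \<subseteq> carrier R"
  shows "h ` (Idl A) = Idl\<^bsub>S\<^esub> (h ` A)"
proof
  have hA: "h ` A \<subseteq> carrier S" using A by auto
  have "Idl A \<subseteq> {r \<in> carrier R. h r \<in> Idl\<^bsub>S\<^esub> (h ` A)}"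
    by (rule R.genideal_minimal[OF ideal_vimage[OF S.genideal_ideal[OF hA]]])
      (use A S.genideal_self[OF hA] in auto)
  then show "h ` (Idl A) \<subseteq> Idl\<^bsub>S\<^esub> (h ` A)" by blast
  show "Idl\<^bsub>S\<^esub> (h ` A) \<subseteq> h ` (Idl A)"
    by (rule S.genideal_minimal[OF ideal_image[OF surj R.genideal_ideal[OF A]]])
      (use R.genideal_self[OF A] in auto)
qed

lemma (in ring_hom_ring) content_comp:
  assumes surj: "h ` carrier R = carrier S" and f: "f \<in> up R"
  shows "content S (h \<circ> f) = h ` content R f"
  using genideal_image[OF surj R.range_up_subset[OF f]]
  by (simp add: content_eq_genideal f comp_in_up image_comp)

section \<open>Gaussian rings\<close>

lemma (in ring) ideal_finsum_closed:
  assumes J: "ideal J R" and f: "\<And>i. i \<in> A \<Longrightarrow> f i \<in> J"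
  shows "finsum R f A \<in> J"
  using f
proof (induction A rule: infinite_finite_induct)
  case (insert i A)
  then have "f i \<in> carrier R" "f ` A \<subseteq> carrier R"
    using ideal.Icarr[OF J] by auto
  with insert show ?case
    by (simp add: finsum_insert image_subset_iff_funcset additive_subgroup.a_closed[OF ideal.axioms(1)[OF J]])
qed (simp_all add: additive_subgroup.zero_closed[OF ideal.axioms(1)[OF J]])

lemma (in cring) ideal_colon:
  assumes J: "ideal J R" and t: "t \<in> carrier R"
  shows "ideal {x \<in> carrier R. x \<otimes> t \<in> J} R"
proof -
  interpret J: ideal J R by (rule J)
  show ?thesis
  proof (rule idealI[OF ring_axioms])
    show "subgroup {x \<in> carrier R. x \<otimes> t \<in> J} (add_monoid R)"
      using t by (intro add.subgroupI)
        (auto simp: l_minus l_distr intro: J.a_closed J.a_inv_closed J.zero_closed)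
  next
    fix a x assume "a \<in> {x \<in> carrier R. x \<otimes> t \<in> J}" and x: "x \<in> carrier R"
    then have a: "a \<in> carrier R" "a \<otimes> t \<in> J" by auto
    have "x \<otimes> a \<otimes> t = x \<otimes> (a \<otimes> t)" "a \<otimes> x \<otimes> t = x \<otimes> (a \<otimes> t)"
      using a x t by (simp_all add: m_assoc m_lcomm)
    then show "x \<otimes> a \<in> {x \<in> carrier R. x \<otimes> t \<in> J}" "a \<otimes> x \<in> {x \<in> carrier R. x \<otimes> t \<in> J}"
      using a x J.I_l_closed by auto
  qed
qed

lemma (in cring) ideal_prod_genideal_subset:
  assumes J: "ideal J R" and A: "A \<subseteq> carrier R" and B: "B \<subseteq> carrier R"
    and AB: "\<And>a b. a \<in> A \<Longrightarrow> b \<in> B \<Longrightarrow> a \<otimes> b \<in> J"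
  shows "(Idl A) \<cdot> (Idl B) \<subseteq> J"
proof -
  have left: "a \<otimes> b \<in> J" if "a \<in> Idl A" "b \<in> B" for a b
  proof -
    have "Idl A \<subseteq> {x \<in> carrier R. x \<otimes> b \<in> J}"
      using that(2) A B AB by (intro genideal_minimal ideal_colon J) auto
    then show ?thesis using that(1) by blast
  qed
  have both: "a \<otimes> b \<in> J" if "a \<in> Idl A" "b \<in> Idl B" for a b
  proof -
    have a: "a \<in> carrier R" using that(1) ideal.Icarr[OF genideal_ideal[OF A]] by blast
    have "b \<otimes> a \<in> J" if "b \<in> B" for b
      using left[OF \<open>a \<in> Idl A\<close> that] that B a by (simp add: m_comm subsetD)
    then have "Idl B \<subseteq> {x \<in> carrier R. x \<otimes> a \<in> J}"
      using a B by (intro genideal_minimal ideal_colon J) auto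
    then show ?thesis using that(2) a by (auto simp: m_comm)
  qed
  show ?thesis
    unfolding ideal_prod_eq_genideal[OF genideal_ideal[OF A] genideal_ideal[OF B]]
    using both by (intro genideal_minimal J) (auto simp: set_mult_def)
qed

lemma (in cring) content_mult_subset:
  assumes f: "f \<in> up R" and g: "g \<in> up R"
  shows "content R (f \<otimes>\<^bsub>UP R\<^esub> g) \<subseteq> content R f \<cdot> content R g"
proof -
  have J: "ideal (content R f \<cdot> content R g) R"
    using f g by (simp add: content_eq_genideal ideal_prod_is_ideal genideal_ideal range_up_subset)
  have "f i \<otimes> g j \<in> content R f \<cdot> content R g" for i j
    using f g genideal_self[OF range_up_subset[OF f]] genideal_self[OF range_up_subset[OF g]]
    by (auto simp: content_eq_genideal intro!: ideal_prod.prod)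
  then have "range (f \<otimes>\<^bsub>UP R\<^esub> g) \<subseteq> content R f \<cdot> content R g"
    by (auto simp: UP_mult_eq[OF f g] intro: ideal_finsum_closed[OF J])
  then show ?thesis
    unfolding content_eq_genideal[OF UP_mult_in_up[OF f g]] by (rule genideal_minimal[OF J])
qed

lemma (in cring) gaussian_ring_iff:
  "gaussian_ring R \<longleftrightarrow>
     (\<forall>f \<in> up R. \<forall>g \<in> up R. \<forall>k l. f k \<otimes> g l \<in> content R (f \<otimes>\<^bsub>UP R\<^esub> g))"
proof -
  have products: "content R f \<cdot> content R g \<subseteq> content R (f \<otimes>\<^bsub>UP R\<^esub> g) \<longleftrightarrow>
          (\<forall>k l. f k \<otimes> g l \<in> content R (f \<otimes>\<^bsub>UP R\<^esub> g))"
    if f: "f \<in> up R" and g: "g \<in> up R" for f g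
  proof -
    have J: "ideal (content R (f \<otimes>\<^bsub>UP R\<^esub> g)) R"
      by (simp add: content_eq_genideal UP_mult_in_up f g genideal_ideal range_up_subset)
    have "f k \<otimes> g l \<in> content R f \<cdot> content R g" for k l
      using f g genideal_self[OF range_up_subset[OF f]] genideal_self[OF range_up_subset[OF g]]
      by (auto simp: content_eq_genideal intro!: ideal_prod.prod)
    then show ?thesis
      using ideal_prod_genideal_subset[OF J range_up_subset[OF f] range_up_subset[OF g]]
      by (auto simp: content_eq_genideal f g)
  qed
  then show ?thesis
    unfolding gaussian_ring_def carrier_UP set_eq_subset by (simp add: content_mult_subset products)
qed

lemma (in ring_hom_cring) gaussian_ring_image:
  assumes surj: "h ` carrier R = carrier S" and gauss: "gaussian_ring R"
  shows "gaussian_ring S"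
  unfolding S.gaussian_ring_iff
proof (intro ballI allI)
  fix f g k l assume f: "f \<in> up S" and g: "g \<in> up S"
  obtain F G where F: "F \<in> up R" "h \<circ> F = f" and G: "G \<in> up R" "h \<circ> G = g"
    using ring.lift_up[OF surj f] ring.lift_up[OF surj g] by metis
  have "F k \<otimes> G l \<in> content R (F \<otimes>\<^bsub>UP R\<^esub> G)"
    using gauss F(1) G(1) by (simp add: R.gaussian_ring_iff)
  then have "h (F k \<otimes> G l) \<in> content S (h \<circ> (F \<otimes>\<^bsub>UP R\<^esub> G))"
    by (simp add: ring.content_comp[OF surj] R.UP_mult_in_up F(1) G(1))
  moreover have "h (F k \<otimes> G l) = f k \<otimes>\<^bsub>S\<^esub> g l"
    using F G by (auto simp: mem_upD)
  ultimately show "f k \<otimes>\<^bsub>S\<^esub> g l \<in> content S (f \<otimes>\<^bsub>UP S\<^esub> g)"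
    by (simp add: ring.comp_UP_mult F G)
qed

section \<open>Pure ideals have local units\<close>

lemma flat_module_annihilatedE:
  fixes R (structure)
  assumes R: "ring R" and M: "abelian_monoid M" and flat: "flat_module R M"
    and a: "a \<in> carrier R" and x: "x \<in> carrier M" and ax: "a \<odot>\<^bsub>M\<^esub> x = \<zero>\<^bsub>M\<^esub>"
  obtains m b y where "\<And>j::nat. j < m \<Longrightarrow> b j \<in> carrier R \<and> y j \<in> carrier M \<and> a \<otimes> b j = \<zero>"
    and "x = (\<Oplus>\<^bsub>M\<^esub>j \<in> {..<m}. b j \<odot>\<^bsub>M\<^esub> y j)"
proof -
  interpret R: ring R by (rule R)
  interpret M: abelian_monoid M by (rule M)
  have "(\<forall>i<1::nat. a \<in> carrier R \<and> x \<in> carrier M) \<and>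
      (\<Oplus>\<^bsub>M\<^esub>i \<in> {..<1::nat}. a \<odot>\<^bsub>M\<^esub> x) = \<zero>\<^bsub>M\<^esub>"
    using a x by (simp add: ax lessThan_Suc)
  from mp[OF flat[unfolded flat_module_def, THEN spec[of _ 1], THEN spec[of _ "\<lambda>_. a"],
        THEN spec[of _ "\<lambda>_. x"]] this]
  obtain m b y where
      y: "\<forall>j<(m::nat). y j \<in> carrier M" and b: "\<forall>i<1::nat. \<forall>j<m. b i j \<in> carrier R"
    and x: "\<forall>i<1::nat. x = (\<Oplus>\<^bsub>M\<^esub>j \<in> {..<m}. b i j \<odot>\<^bsub>M\<^esub> y j)"
    and ab: "\<forall>j<m. (\<Oplus>i \<in> {..<1::nat}. a \<otimes> b i j) = \<zero>"
    by blast
  show thesis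
  proof (rule that[of m "b 0" y])
    show "b 0 j \<in> carrier R \<and> y j \<in> carrier M \<and> a \<otimes> b 0 j = \<zero>" if "j < m" for j
      using that y b ab a by (simp add: lessThan_Suc)
  qed (use x in simp)
qed

lemma carrier_quot_module: "carrier (quot_module R I) = a_rcosets\<^bsub>R\<^esub> I"
  by (simp add: quot_module_def)

text \<open>\<open>quot_module R I\<close> has the additive structure of \<open>R Quot I\<close>; only the record types differ.\<close>

lemma finsum_quot_module: "finsum (quot_module R I) f A = finsum (R Quot I) f A"
  by (simp add: finsum_def finprod_def quot_module_def FactRing_def)

lemma (in ideal) abelian_monoid_quot_module: "abelian_monoid (quot_module R I)"
proof -
  interpret Q: ring "R Quot I" by (rule quotient_is_ring)
  have M: "carrier (quot_module R I) = carrier (R Quot I)" "add (quot_module R I) = add (R Quot I)"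
    "zero (quot_module R I) = zero (R Quot I)"
    by (simp_all add: quot_module_def FactRing_def)
  show ?thesis
    by (rule abelian_monoidI) (simp_all add: M Q.a_ac)
qed

lemma (in ideal) quot_module_smult:
  "r \<in> carrier R \<Longrightarrow> s \<in> carrier R \<Longrightarrow> r \<odot>\<^bsub>quot_module R I\<^esub> (I +> s) = I +> (r \<otimes> s)"
  using rcoset_mult_add by (simp add: quot_module_def)

lemma (in ideal) quot_module_lincomb:
  assumes b: "\<And>j. j \<in> A \<Longrightarrow> b j \<in> carrier R" and r: "\<And>j. j \<in> A \<Longrightarrow> r j \<in> carrier R"
  shows "(\<Oplus>\<^bsub>quot_module R I\<^esub>j \<in> A. b j \<odot>\<^bsub>quot_module R I\<^esub> (I +> r j)) = I +> (\<Oplus>j \<in> A. b j \<otimes> r j)"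
proof -
  interpret Q: ring "R Quot I" by (rule quotient_is_ring)
  have br: "(\<lambda>j. b j \<otimes> r j) \<in> A \<rightarrow> carrier R" using b r by auto
  have "(\<Oplus>\<^bsub>quot_module R I\<^esub>j \<in> A. b j \<odot>\<^bsub>quot_module R I\<^esub> (I +> r j))
      = (\<Oplus>\<^bsub>R Quot I\<^esub>j \<in> A. I +> (b j \<otimes> r j))"
    unfolding finsum_quot_module
  proof (rule Q.add.finprod_cong')
    show "(\<lambda>j. I +> (b j \<otimes> r j)) \<in> A \<rightarrow> carrier (R Quot I)"
      using br by (auto simp: FactRing_def intro: a_rcosetsI[OF a_subset])
  qed (simp_all add: b r quot_module_smult)
  also have "\<dots> = I +> (\<Oplus>j \<in> A. b j \<otimes> r j)"
    using ring_hom_ring.hom_finsum[OF rcos_ring_hom_ring br] by (simp add: comp_def)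
  finally show ?thesis .
qed

lemma pure_ideal_local_unit:
  fixes R (structure)
  assumes R: "cring R" and pure: "pure_ideal R I" and u: "u \<in> I"
  shows "\<exists>e \<in> I. u \<otimes> e = u"
proof -
  interpret cring R by (rule R)
  interpret ideal I R using pure by (simp add: pure_ideal_def)
  let ?M = "quot_module R I"
  have uc: "u \<in> carrier R" using u by (rule Icarr)
  have one: "I +> \<one> \<in> carrier ?M"
    by (simp add: carrier_quot_module a_rcosetsI a_subset)
  have "u \<odot>\<^bsub>?M\<^esub> (I +> \<one>) = I +> u"
    using quot_module_smult[OF uc one_closed] uc by simp
  also have "\<dots> = \<zero>\<^bsub>?M\<^esub>"
    using u by (simp add: a_rcos_const quot_module_def)
  finally have "u \<odot>\<^bsub>?M\<^esub> (I +> \<one>) = \<zero>\<^bsub>?M\<^esub>" .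
  moreover have "flat_module R ?M" using pure by (simp add: pure_ideal_def)
  ultimately obtain m b y where
      coeffs: "\<And>j::nat. j < m \<Longrightarrow> b j \<in> carrier R \<and> y j \<in> carrier ?M \<and> u \<otimes> b j = \<zero>"
    and one_eq: "I +> \<one> = (\<Oplus>\<^bsub>?M\<^esub>j \<in> {..<m}. b j \<odot>\<^bsub>?M\<^esub> y j)"
    using flat_module_annihilatedE[OF ring_axioms abelian_monoid_quot_module _ uc one] by blast
  have "\<forall>j \<in> {..<m}. \<exists>r. r \<in> carrier R \<and> y j = I +> r"
    using coeffs by (fastforce simp: carrier_quot_module A_RCOSETS_def')
  then obtain r where r: "\<And>j. j < m \<Longrightarrow> r j \<in> carrier R \<and> y j = I +> r j"
    by (auto dest!: bchoice)
  define s where "s = (\<Oplus>j \<in> {..<m}. b j \<otimes> r j)"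
  have br: "(\<lambda>j. b j \<otimes> r j) \<in> {..<m} \<rightarrow> carrier R" using coeffs r by auto
  then have sc: "s \<in> carrier R" unfolding s_def by (rule finsum_closed)
  interpret M: abelian_monoid ?M by (rule abelian_monoid_quot_module)
  have "I +> \<one> = (\<Oplus>\<^bsub>?M\<^esub>j \<in> {..<m}. b j \<odot>\<^bsub>?M\<^esub> (I +> r j))"
    unfolding one_eq using coeffs r
    by (intro M.finsum_cong') (auto simp: quot_module_smult carrier_quot_module intro!: a_rcosetsI[OF a_subset])
  also have "\<dots> = I +> s"
    unfolding s_def using coeffs r by (intro quot_module_lincomb) auto
  finally have "\<one> \<ominus> s \<in> I"
    using quotient_eq_iff_same_a_r_cos[OF is_ideal one_closed sc] by simp
  moreover have "u \<otimes> s = \<zero>"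
  proof -
    have "u \<otimes> s = (\<Oplus>j \<in> {..<m}. u \<otimes> (b j \<otimes> r j))"
      unfolding s_def using finsum_rdistr[OF _ uc br] by simp
    also have "\<dots> = (\<Oplus>j \<in> {..<m}. \<zero>)"
      using coeffs r uc by (intro finsum_cong') (auto simp: m_assoc[symmetric])
    finally show ?thesis by simp
  qed
  then have "u \<otimes> (\<one> \<ominus> s) = u"
    using uc sc by (simp add: r_distr a_minus_def r_minus)
  ultimately show ?thesis by blast
qed

section \<open>Amalgamated duplication\<close>

lemma amalg_dup_simps [simp]:
  "(a, b) \<oplus>\<^bsub>amalg_dup R I\<^esub> (c, d) = (a \<oplus>\<^bsub>R\<^esub> c, b \<oplus>\<^bsub>R\<^esub> d)"
  "(a, b) \<otimes>\<^bsub>amalg_dup R I\<^esub> (c, d) = (a \<otimes>\<^bsub>R\<^esub> c, b \<otimes>\<^bsub>R\<^esub> d)"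
  "\<zero>\<^bsub>amalg_dup R I\<^esub> = (\<zero>\<^bsub>R\<^esub>, \<zero>\<^bsub>R\<^esub>)"
  "\<one>\<^bsub>amalg_dup R I\<^esub> = (\<one>\<^bsub>R\<^esub>, \<one>\<^bsub>R\<^esub>)"
  by (simp_all add: amalg_dup_def)

lemma amalg_dup_eq_restrict:
  "amalg_dup R I = (RDirProd R R) \<lparr>carrier := carrier (amalg_dup R I)\<rparr>"
  by (simp add: amalg_dup_def RDirProd_def DirProd_def monoid.defs case_prod_beta')

locale amalgamated_duplication = cring R + ideal I R for R (structure) and I
begin

abbreviation D where "D \<equiv> amalg_dup R I"

lemma amalg_dup_mem_iff:
  "(a, b) \<in> carrier D \<longleftrightarrow> a \<in> carrier R \<and> b \<in> carrier R \<and> b \<ominus> a \<in> I"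
proof
  assume "(a, b) \<in> carrier D"
  then obtain i where "a \<in> carrier R" "i \<in> I" "b = a \<oplus> i"
    by (auto simp: amalg_dup_def)
  moreover have "(a \<oplus> i) \<ominus> a = i" if "a \<in> carrier R" "i \<in> carrier R" for i
    using that by algebra
  ultimately show "a \<in> carrier R \<and> b \<in> carrier R \<and> b \<ominus> a \<in> I"
    by (simp add: Icarr)
next
  assume h: "a \<in> carrier R \<and> b \<in> carrier R \<and> b \<ominus> a \<in> I"
  then have "b = a \<oplus> (b \<ominus> a)" by algebra
  with h show "(a, b) \<in> carrier D" by (auto simp: amalg_dup_def)
qed

lemma diag_in_amalg_dup: "r \<in> carrier R \<Longrightarrow> (r, r) \<in> carrier D"
  by (simp add: amalg_dup_mem_iff a_minus_def r_neg additive_subgroup.zero_closed is_additive_subgroup)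

lemma amalg_dup_subset: "carrier D \<subseteq> carrier R \<times> carrier R"
  by (auto simp: amalg_dup_mem_iff)

lemma subcring_amalg_dup: "subcring (carrier D) (RDirProd R R)"
proof -
  interpret P: ring "RDirProd R R" by (rule RDirProd_ring) (rule ring_axioms)+
  have neg: "\<ominus>\<^bsub>RDirProd R R\<^esub> (a, b) = (\<ominus> a, \<ominus> b)" if "a \<in> carrier R" "b \<in> carrier R" for a b
    using that by (intro P.minus_equality) (auto simp: RDirProd_def DirProd_def monoid.defs l_neg)
  show ?thesis
  proof (intro P.subcringI P.subringI)
    show "carrier D \<subseteq> carrier (RDirProd R R)"
      using amalg_dup_subset by (simp add: RDirProd_carrier)
    show "\<one>\<^bsub>RDirProd R R\<^esub> \<in> carrier D"
      using diag_in_amalg_dup[OF one_closed] by (simp add: RDirProd_def DirProd_def monoid.defs)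
  next
    fix x y assume x: "x \<in> carrier D" and y: "y \<in> carrier D"
    obtain a b c d where xy: "x = (a, b)" "y = (c, d)" by fastforce
    have h: "a \<in> carrier R" "b \<in> carrier R" "b \<ominus> a \<in> I" "c \<in> carrier R" "d \<in> carrier R" "d \<ominus> c \<in> I"
      using x y by (simp_all add: xy amalg_dup_mem_iff)
    have "\<ominus> b \<ominus> \<ominus> a = \<ominus> (b \<ominus> a)" "b \<oplus> d \<ominus> (a \<oplus> c) = (b \<ominus> a) \<oplus> (d \<ominus> c)"
      "b \<otimes> d \<ominus> a \<otimes> c = b \<otimes> (d \<ominus> c) \<oplus> (b \<ominus> a) \<otimes> c"
      using h by algebra+
    then show "\<ominus>\<^bsub>RDirProd R R\<^esub> x \<in> carrier D"
      using h by (simp add: xy neg amalg_dup_mem_iff a_inv_closed)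
    show "x \<otimes>\<^bsub>RDirProd R R\<^esub> y \<in> carrier D" "x \<oplus>\<^bsub>RDirProd R R\<^esub> y \<in> carrier D"
      "x \<otimes>\<^bsub>RDirProd R R\<^esub> y = y \<otimes>\<^bsub>RDirProd R R\<^esub> x"
      using h \<open>b \<oplus> d \<ominus> (a \<oplus> c) = _\<close> \<open>b \<otimes> d \<ominus> a \<otimes> c = _\<close>
      by (auto simp: xy amalg_dup_mem_iff RDirProd_def DirProd_def monoid.defs m_comm
          intro: a_closed I_l_closed I_r_closed)
  qed
qed

lemma cring_amalg_dup: "cring D"
proof -
  interpret P: ring "RDirProd R R" by (rule RDirProd_ring) (rule ring_axioms)+
  show ?thesis
    using P.subcring_iff[of "carrier D"] subcring_amalg_dup amalg_dup_subset
    by (subst amalg_dup_eq_restrict) (simp add: RDirProd_carrier)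
qed

lemma fst_ring_hom: "ring_hom_cring D R fst"
  by (rule ring_hom_cringI[OF cring_amalg_dup cring_axioms ring_hom_memI]) (auto simp: amalg_dup_def)

lemma snd_ring_hom: "ring_hom_cring D R snd"
  by (rule ring_hom_cringI[OF cring_amalg_dup cring_axioms ring_hom_memI]) (auto simp: amalg_dup_def)

lemma fst_image: "fst ` carrier D = carrier R"
proof
  show "fst ` carrier D \<subseteq> carrier R" using amalg_dup_subset by auto
  show "carrier R \<subseteq> fst ` carrier D" by (metis diag_in_amalg_dup fst_conv image_eqI subsetI)
qed

lemma snd_image: "snd ` carrier D = carrier R"
proof
  show "snd ` carrier D \<subseteq> carrier R" using amalg_dup_subset by auto
  show "carrier R \<subseteq> snd ` carrier D" by (metis diag_in_amalg_dup snd_conv image_eqI subsetI)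
qed

lemma ideal_amalg_dup_pairI:
  assumes J: "ideal J D" and units: "\<And>u. u \<in> I \<Longrightarrow> \<exists>e \<in> I. u \<otimes> e = u"
    and ab': "(a, b') \<in> J" and a'b: "(a', b) \<in> J" and ab: "(a, b) \<in> carrier D"
  shows "(a, b) \<in> J"
proof -
  have ab'D: "(a, b') \<in> carrier D" and a'bD: "(a', b) \<in> carrier D"
    using ab' a'b ideal.Icarr[OF J] by auto
  have c: "a \<in> carrier R" "b' \<in> carrier R" "a' \<in> carrier R" "b \<in> carrier R"
    using ab'D a'bD by (simp_all add: amalg_dup_mem_iff)
  have "(b \<ominus> a) \<ominus> (b' \<ominus> a) \<in> I"
    using ab'D ab by (simp add: amalg_dup_mem_iff a_minus_def a_closed a_inv_closed)
  moreover have "(b \<ominus> a) \<ominus> (b' \<ominus> a) = b \<ominus> b'" using c by algebra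
  ultimately obtain e where e: "e \<in> I" and ue: "(b \<ominus> b') \<otimes> e = b \<ominus> b'"
    using units by metis
  have ec: "e \<in> carrier R" using e by (rule Icarr)
  have e0: "(\<zero>, e) \<in> carrier D" "(\<zero>, \<ominus> e) \<in> carrier D"
    using e ec by (simp_all add: amalg_dup_mem_iff a_minus_def a_inv_closed)
  have "b' \<oplus> e \<otimes> b \<oplus> \<ominus> e \<otimes> b' = b' \<oplus> (b \<ominus> b') \<otimes> e" using c ec by algebra
  also have "\<dots> = b" using c by (simp add: ue) algebra
  finally have "(a, b) = (a, b') \<oplus>\<^bsub>D\<^esub> (\<zero>, e) \<otimes>\<^bsub>D\<^esub> (a', b) \<oplus>\<^bsub>D\<^esub> (\<zero>, \<ominus> e) \<otimes>\<^bsub>D\<^esub> (a, b')"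
    using c ec by simp
  also have "\<dots> \<in> J"
    using ab' a'b e0 by (intro ideal.I_l_closed[OF J] additive_subgroup.a_closed[OF ideal.axioms(1)[OF J]])
  finally show ?thesis .
qed

lemma content_amalg_dupI:
  assumes units: "\<And>u. u \<in> I \<Longrightarrow> \<exists>e \<in> I. u \<otimes> e = u"
    and F: "F \<in> up D" and ab: "(a, b) \<in> carrier D"
    and a: "a \<in> content R (fst \<circ> F)" and b: "b \<in> content R (snd \<circ> F)"
  shows "(a, b) \<in> content D F"
proof -
  interpret D: cring D by (rule cring_amalg_dup)
  interpret P: ring_hom_cring D R fst by (rule fst_ring_hom)
  interpret Q: ring_hom_cring D R snd by (rule snd_ring_hom)
  have J: "ideal (content D F) D"
    using F by (simp add: content_eq_genideal D.genideal_ideal D.range_up_subset)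
  obtain b' where "(a, b') \<in> content D F"
    using a P.ring.content_comp[OF fst_image F] by force
  moreover obtain a' where "(a', b) \<in> content D F"
    using b Q.ring.content_comp[OF snd_image F] by force
  ultimately show ?thesis
    using ideal_amalg_dup_pairI[OF J units] ab by blast
qed

lemma gaussian_amalg_dup:
  assumes units: "\<And>u. u \<in> I \<Longrightarrow> \<exists>e \<in> I. u \<otimes> e = u" and gauss: "gaussian_ring R"
  shows "gaussian_ring D"
  unfolding cring.gaussian_ring_iff[OF cring_amalg_dup]
proof (intro ballI allI)
  interpret D: cring D by (rule cring_amalg_dup)
  interpret P: ring_hom_cring D R fst by (rule fst_ring_hom)
  interpret Q: ring_hom_cring D R snd by (rule snd_ring_hom)
  fix F G k l assume F: "F \<in> up D" and G: "G \<in> up D"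
  have FG: "F k \<otimes>\<^bsub>D\<^esub> G l \<in> carrier D" using F G by (simp add: mem_upD)
  have "(fst \<circ> F) k \<otimes> (fst \<circ> G) l \<in> content R ((fst \<circ> F) \<otimes>\<^bsub>UP R\<^esub> (fst \<circ> G))"
    using gauss P.ring.comp_in_up[OF F] P.ring.comp_in_up[OF G] by (simp only: gaussian_ring_iff)
  moreover have "(snd \<circ> F) k \<otimes> (snd \<circ> G) l \<in> content R ((snd \<circ> F) \<otimes>\<^bsub>UP R\<^esub> (snd \<circ> G))"
    using gauss Q.ring.comp_in_up[OF F] Q.ring.comp_in_up[OF G] by (simp only: gaussian_ring_iff)
  ultimately have "fst (F k \<otimes>\<^bsub>D\<^esub> G l) \<in> content R (fst \<circ> (F \<otimes>\<^bsub>UP D\<^esub> G))"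
    and "snd (F k \<otimes>\<^bsub>D\<^esub> G l) \<in> content R (snd \<circ> (F \<otimes>\<^bsub>UP D\<^esub> G))"
    using F G by (simp_all add: P.ring.comp_UP_mult Q.ring.comp_UP_mult mem_upD)
  moreover obtain x y where "F k \<otimes>\<^bsub>D\<^esub> G l = (x, y)" by fastforce
  ultimately show "F k \<otimes>\<^bsub>D\<^esub> G l \<in> content D (F \<otimes>\<^bsub>UP D\<^esub> G)"
    using content_amalg_dupI[OF units D.UP_mult_in_up[OF F G]] FG by simp
qed

lemma gaussian_of_amalg_dup: "gaussian_ring D \<Longrightarrow> gaussian_ring R"
  by (rule ring_hom_cring.gaussian_ring_image[OF fst_ring_hom fst_image])

end

theorem corollary2p6:
  fixes R :: "('a, 'b) ring_scheme" and I :: "'a set"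
  assumes "cring R" and "reduced_ring R" and "ideal I R" and "pure_ideal R I"
  shows "gaussian_ring R \<longleftrightarrow> gaussian_ring (amalg_dup R I)"
proof -
  interpret amalgamated_duplication R I
    using assms(1,3) by (simp add: amalgamated_duplication_def)
  show ?thesis
    using gaussian_amalg_dup gaussian_of_amalg_dup pure_ideal_local_unit[OF assms(1,4)] by blast
qed

end
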